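(* Let $N\in\mathbb{N}$, $f_1,\ldots,f_N:[0,1]\to[0,\infty)$ measurable functions, and $\varepsilon>0$. Then there exist orientation preserving diffeomorphisms $\phi_1,\ldots,\phi_N$ of $[0,1]$ such that \[\int_0^1\max_i\big(f_i(\phi_i(\tilde t))\,\dot\phi_i(\tilde t)\big)\,d\tilde t\leq\max_i\int_0^1f_i(t)\,dt+\varepsilon.\] *)

theory Defs
  imports "HOL-Analysis.Analysis"
begin

definition smooth_on_open :: "real set \<Rightarrow> (real \<Rightarrow> real) \<Rightarrow> bool" where
  "smooth_on_open U g \<longleftrightarrow> open U \<and>
     (\<forall>k. \<forall>x\<in>U. ((deriv ^^ k) g) field_differentiable (at x))"

text \<open>Smooth on the closed interval [0,1] in the sense of manifolds with boundary:
  smooth on some open neighbourhood of [0,1] (values outside [0,1] are irrelevant,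
  so this is the same as admitting a smooth extension).\<close>
definition smooth_on_unit :: "(real \<Rightarrow> real) \<Rightarrow> bool" where
  "smooth_on_unit g \<longleftrightarrow> (\<exists>U. {0..1} \<subseteq> U \<and> smooth_on_open U g)"

definition op_diffeo_unit :: "(real \<Rightarrow> real) \<Rightarrow> bool" where
  "op_diffeo_unit \<phi> \<longleftrightarrow>
     bij_betw \<phi> {0..1} {0..1} \<and> smooth_on_unit \<phi> \<and>
     (\<exists>\<psi>. smooth_on_unit \<psi> \<and> (\<forall>x\<in>{0..1}. \<psi> (\<phi> x) = x)) \<and>
     strict_mono_on {0..1} \<phi>"

end

theory Submission
  imports Defs
begin

text \<open>Approximate each \<open>f\<^sub>i\<close> in \<open>L\<^sup>1[0,1]\<close> by a polynomial density \<open>h\<^sub>i\<close> that is positive on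
  \<open>[0,1]\<close>. Let \<open>\<phi>\<^sub>i\<close> be the inverse of the normalised primitive of \<open>h\<^sub>i\<close>: it is a smooth orientation
  preserving diffeomorphism with \<open>h\<^sub>i (\<phi>\<^sub>i s) * \<phi>\<^sub>i' s = \<integral> h\<^sub>i\<close> for all \<open>s\<close>. Hence
  \<open>f\<^sub>i (\<phi>\<^sub>i s) * \<phi>\<^sub>i' s \<le> \<integral> h\<^sub>i + \<bar>f\<^sub>i - h\<^sub>i\<bar> (\<phi>\<^sub>i s) * \<phi>\<^sub>i' s\<close>, and bounding the maximum over \<open>i\<close> by the
  largest constant plus the sum of all error terms gives, after changing variables in each error
  term, \<open>\<integral> max\<^sub>i \<le> max\<^sub>i \<integral> h\<^sub>i + \<Sum>\<^sub>i \<integral> \<bar>f\<^sub>i - h\<^sub>i\<bar>\<close>, which is within \<open>\<epsilon>\<close> of \<open>max\<^sub>i \<integral> f\<^sub>i\<close>.\<close>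

section \<open>Smooth inverses of polynomials\<close>

lemma deriv_poly: "deriv (poly p) = poly (pderiv (p :: real poly))"
  by (rule ext) (rule DERIV_imp_deriv, rule poly_DERIV)

lemma smooth_on_unit_poly: "smooth_on_unit (poly (p :: real poly))"
proof -
  have "(deriv ^^ k) (poly p) = poly ((pderiv ^^ k) p)" for k
    by (induction k) (simp_all add: deriv_poly)
  then show ?thesis
    unfolding smooth_on_unit_def smooth_on_open_def
    by (intro exI[of _ UNIV]) (auto simp: field_differentiable_def intro: poly_DERIV)
qed

lemma has_real_derivative_poly_quotient:
  fixes P h :: "real poly"
  assumes "poly h x \<noteq> 0"
  shows "((\<lambda>x. poly P x / poly h x ^ n) has_real_derivative
           poly (pderiv P * h - smult (of_nat n) (P * pderiv h)) x / poly h x ^ Suc n) (at x)"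
proof (rule DERIV_cong[OF DERIV_divide[OF poly_DERIV DERIV_power[OF poly_DERIV]]])
  show "poly h x ^ n \<noteq> 0"
    using assms by simp
  show "(poly (pderiv P) x * poly h x ^ n - poly P x * (of_nat n * (poly (pderiv h) x * poly h x ^ (n - Suc 0))))
      / (poly h x ^ n * poly h x ^ n)
      = poly (pderiv P * h - smult (of_nat n) (P * pderiv h)) x / poly h x ^ Suc n"
    using assms by (cases n) (simp_all add: divide_simps, simp_all add: algebra_simps)
qed

lemma has_real_derivative_poly_inverse:
  fixes p :: "real poly"
  assumes "open U" and "y \<in> U"
    and "\<And>y. y \<in> U \<Longrightarrow> isCont g y"
    and "\<And>y. y \<in> U \<Longrightarrow> poly p (g y) = y"
    and "poly (pderiv p) (g y) \<noteq> 0"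
  shows "(g has_real_derivative 1 / poly (pderiv p) (g y)) (at y)"
proof -
  obtain e where "e > 0" "ball y e \<subseteq> U"
    using assms(1,2) open_contains_ball by blast
  then have "(g has_real_derivative inverse (poly (pderiv p) (g y))) (at y)"
    using assms(2-5)
    by (intro DERIV_inverse_function[where f = "poly p" and a = "y - e" and b = "y + e"] poly_DERIV)
      (auto simp: dist_real_def subset_iff)
  then show ?thesis
    by (simp add: divide_inverse)
qed

text \<open>If \<open>p (g y) = y\<close>, every derivative of \<open>g\<close> has the form \<open>P (g y) / p' (g y) ^ n\<close> for a
  polynomial \<open>P\<close>, and differentiating such a quotient once more keeps this form.\<close>

lemma smooth_on_open_poly_inverse:
  fixes p :: "real poly"
  assumes "open U"
    and cont: "\<And>y. y \<in> U \<Longrightarrow> isCont g y"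
    and inverse: "\<And>y. y \<in> U \<Longrightarrow> poly p (g y) = y"
    and nonzero: "\<And>y. y \<in> U \<Longrightarrow> poly (pderiv p) (g y) \<noteq> 0"
  shows "smooth_on_open U g"
proof -
  let ?h = "pderiv p"
  have g_deriv: "(g has_real_derivative 1 / poly ?h (g y)) (at y)" if "y \<in> U" for y
    using has_real_derivative_poly_inverse[OF assms(1) that cont inverse nonzero[OF that]] .
  have quotient_deriv: "((\<lambda>y. poly P (g y) / poly ?h (g y) ^ n) has_real_derivative
      poly (pderiv P * ?h - smult (of_nat n) (P * pderiv ?h)) (g y) / poly ?h (g y) ^ Suc (Suc n)) (at y)"
    if "y \<in> U" for P n y
    using DERIV_chain2[OF has_real_derivative_poly_quotient[OF nonzero[OF that]] g_deriv[OF that]]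
      nonzero[OF that] by (simp add: field_simps)
  have "\<exists>P n. \<forall>y\<in>U. ((deriv ^^ k) g has_real_derivative poly P (g y) / poly ?h (g y) ^ n) (at y)" for k
  proof (induction k)
    case 0
    show ?case
      using g_deriv by (intro exI[of _ 1] exI[of _ 1]) simp
  next
    case (Suc k)
    then obtain P n where P: "\<And>y. y \<in> U \<Longrightarrow>
        ((deriv ^^ k) g has_real_derivative poly P (g y) / poly ?h (g y) ^ n) (at y)"
      by blast
    have "((deriv ^^ Suc k) g has_real_derivative
        poly (pderiv P * ?h - smult (of_nat n) (P * pderiv ?h)) (g y) / poly ?h (g y) ^ Suc (Suc n)) (at y)"
      if "y \<in> U" for y
      using quotient_deriv[OF that] \<open>open U\<close> that
      by (rule has_field_derivative_transform_within_open) (simp add: DERIV_imp_deriv[OF P])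
    then show ?case
      by blast
  qed
  then show ?thesis
    unfolding smooth_on_open_def field_differentiable_def using \<open>open U\<close> by blast
qed

lemma strict_mono_on_inv_into_Icc:
  fixes f :: "real \<Rightarrow> real"
  assumes "a \<le> b" and cont: "continuous_on {a..b} f" and mono: "strict_mono_on {a..b} f"
  shows "f ` {a..b} = {f a..f b}"
    and "\<And>x. x \<in> {a..b} \<Longrightarrow> inv_into {a..b} f (f x) = x"
    and "strict_mono_on {f a..f b} (inv_into {a..b} f)"
    and "\<And>y. y \<in> {f a<..<f b} \<Longrightarrow> isCont (inv_into {a..b} f) y"
proof -
  have le: "f x \<le> f y \<longleftrightarrow> x \<le> y" if "x \<in> {a..b}" "y \<in> {a..b}" for x y
    using that strict_mono_onD[OF mono, of x y] strict_mono_onD[OF mono, of y x]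
    by (cases x y rule: linorder_cases) auto
  show image: "f ` {a..b} = {f a..f b}"
  proof
    show "f ` {a..b} \<subseteq> {f a..f b}"
      using le \<open>a \<le> b\<close> by auto
    show "{f a..f b} \<subseteq> f ` {a..b}"
      using IVT'[OF _ _ \<open>a \<le> b\<close> cont] by fastforce
  qed
  show inverse: "inv_into {a..b} f (f x) = x" if "x \<in> {a..b}" for x
    using strict_mono_on_imp_inj_on[OF mono] that by simp
  show "strict_mono_on {f a..f b} (inv_into {a..b} f)"
  proof (rule strict_mono_onI)
    fix y y' assume "y \<in> {f a..f b}" "y' \<in> {f a..f b}" "y < y'"
    then have "y \<in> f ` {a..b}" "y' \<in> f ` {a..b}"
      using image by auto
    note inv_into_into[OF this(1)] f_inv_into_f[OF this(1)] inv_into_into[OF this(2)] f_inv_into_f[OF this(2)]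
    then show "inv_into {a..b} f y < inv_into {a..b} f y'"
      using le[of "inv_into {a..b} f y'" "inv_into {a..b} f y"] \<open>y < y'\<close> by linarith
  qed
  have "continuous_on {f a..f b} (inv_into {a..b} f)"
    using continuous_on_inv[OF cont compact_Icc] inverse image by force
  then show "isCont (inv_into {a..b} f) y" if "y \<in> {f a<..<f b}" for y
    using that by (simp add: continuous_on_interior)
qed

lemma inv_into_poly_Icc:
  fixes K :: "real poly"
  assumes "a \<le> b" and pos: "\<And>x. x \<in> {a..b} \<Longrightarrow> poly (pderiv K) x > 0"
  defines "\<phi> \<equiv> inv_into {a..b} (poly K)"
  shows "strict_mono_on {a..b} (poly K)"
    and "smooth_on_open {poly K a<..<poly K b} \<phi>"
    and "\<And>y. y \<in> {poly K a<..<poly K b} \<Longrightarrow> poly (pderiv K) (\<phi> y) * deriv \<phi> y = 1"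
proof -
  show mono: "strict_mono_on {a..b} (poly K)"
  proof (rule strict_mono_onI)
    fix x y assume "x \<in> {a..b}" "y \<in> {a..b}" "x < y"
    then show "poly K x < poly K y"
      using pos by (intro DERIV_pos_imp_increasing[OF \<open>x < y\<close>]) (auto intro: poly_DERIV)
  qed
  have "continuous_on {a..b} (poly K)"
    by (intro continuous_intros)
  note inverse = strict_mono_on_inv_into_Icc[OF \<open>a \<le> b\<close> this mono, folded \<phi>_def]
  have K_\<phi>: "\<phi> y \<in> {a..b} \<and> poly K (\<phi> y) = y" if "y \<in> {poly K a<..<poly K b}" for y
  proof -
    have "y \<in> poly K ` {a..b}"
      using inverse(1) that by auto
    then show ?thesis
      unfolding \<phi>_def by (blast intro: inv_into_into f_inv_into_f)
  qed
  then have nonzero: "poly (pderiv K) (\<phi> y) \<noteq> 0" if "y \<in> {poly K a<..<poly K b}" for y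
    using pos that by (metis less_irrefl)
  show "smooth_on_open {poly K a<..<poly K b} \<phi>"
    using inverse(4) K_\<phi> nonzero by (intro smooth_on_open_poly_inverse[where p = K]) auto
  show "poly (pderiv K) (\<phi> y) * deriv \<phi> y = 1" if "y \<in> {poly K a<..<poly K b}" for y
  proof -
    have "(\<phi> has_real_derivative 1 / poly (pderiv K) (\<phi> y)) (at y)"
      using inverse(4) K_\<phi> nonzero[OF that] that
      by (intro has_real_derivative_poly_inverse[of "{poly K a<..<poly K b}"]) auto
    then show ?thesis
      using nonzero[OF that] by (simp add: DERIV_imp_deriv)
  qed
qed

section \<open>Orientation preserving diffeomorphisms of the unit interval\<close>

lemma op_diffeo_unit_id: "op_diffeo_unit id"
proof -
  have "poly [:0, 1 :: real:] = id"
    by (simp add: fun_eq_iff)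
  then have "smooth_on_unit id"
    using smooth_on_unit_poly by metis
  then show ?thesis
    unfolding op_diffeo_unit_def by (auto simp: strict_mono_on_def)
qed

lemma op_diffeo_unitI:
  assumes "smooth_on_unit \<phi>" "smooth_on_unit \<psi>" and mono: "strict_mono_on {0..1} \<phi>"
    and "\<phi> 0 = 0" "\<phi> 1 = 1"
    and left_inverse: "\<And>s. s \<in> {0..1} \<Longrightarrow> \<psi> (\<phi> s) = s"
    and right_inverse: "\<And>x. x \<in> {0..1} \<Longrightarrow> \<psi> x \<in> {0..1} \<and> \<phi> (\<psi> x) = x"
  shows "op_diffeo_unit \<phi>"
proof -
  have "\<phi> ` {0..1} \<subseteq> {0..1}"
  proof
    fix x assume "x \<in> \<phi> ` {0..1}"
    then obtain s where s: "s \<in> {0..1}" "x = \<phi> s"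
      by blast
    then have "\<phi> 0 \<le> \<phi> s" "\<phi> s \<le> \<phi> 1"
      using mono by (auto simp: strict_mono_on_def less_eq_real_def)
    then show "x \<in> {0..1}"
      using s \<open>\<phi> 0 = 0\<close> \<open>\<phi> 1 = 1\<close> by simp
  qed
  moreover have "{0..1} \<subseteq> \<phi> ` {0..1}"
    using right_inverse by (metis image_eqI subsetI)
  ultimately have "bij_betw \<phi> {0..1} {0..1}"
    using strict_mono_on_imp_inj_on[OF mono] by (simp add: bij_betw_def)
  then show ?thesis
    unfolding op_diffeo_unit_def using assms by blast
qed

lemma op_diffeo_unit_image: "op_diffeo_unit \<phi> \<Longrightarrow> s \<in> {0..1} \<Longrightarrow> \<phi> s \<in> {0..1}"
  unfolding op_diffeo_unit_def bij_betw_def by blast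

lemma op_diffeo_unit_endpoints:
  assumes "op_diffeo_unit \<phi>"
  shows "\<phi> 0 = 0" "\<phi> 1 = 1"
proof -
  have img: "\<phi> ` {0..1} = {0..1}" and mono: "strict_mono_on {0..1} \<phi>"
    using assms by (auto simp: op_diffeo_unit_def bij_betw_def)
  have "0 \<in> \<phi> ` {0..1}" "1 \<in> \<phi> ` {0..1}"
    using img by auto
  then obtain z w where z: "z \<in> {0..1}" "\<phi> z = 0" and w: "w \<in> {0..1}" "\<phi> w = 1"
    by (metis imageE)
  have "\<phi> 0 \<in> {0..1}" "\<phi> 1 \<in> {0..1}"
    using img by auto
  moreover have "z = 0"
  proof (rule ccontr)
    assume "z \<noteq> 0"
    then have "\<phi> 0 < \<phi> z"
      using z(1) by (intro strict_mono_onD[OF mono]) auto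
    then show False
      using z(2) \<open>\<phi> 0 \<in> {0..1}\<close> by simp
  qed
  moreover have "w = 1"
  proof (rule ccontr)
    assume "w \<noteq> 1"
    then have "\<phi> w < \<phi> 1"
      using w(1) by (intro strict_mono_onD[OF mono]) auto
    then show False
      using w(2) \<open>\<phi> 1 \<in> {0..1}\<close> by simp
  qed
  ultimately show "\<phi> 0 = 0" "\<phi> 1 = 1"
    using z w by simp_all
qed

lemma op_diffeo_unit_has_derivative:
  assumes "op_diffeo_unit \<phi>" "s \<in> {0..1}"
  shows "(\<phi> has_real_derivative deriv \<phi> s) (at s)" "isCont (deriv \<phi>) s"
proof -
  obtain U where "{0..1} \<subseteq> U" and smooth: "\<And>k. \<forall>x\<in>U. (deriv ^^ k) \<phi> field_differentiable (at x)"
    using assms(1) by (auto simp: op_diffeo_unit_def smooth_on_unit_def smooth_on_open_def)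
  then have "s \<in> U"
    using assms(2) by blast
  show "(\<phi> has_real_derivative deriv \<phi> s) (at s)"
    using smooth[of 0] \<open>s \<in> U\<close> by (simp add: DERIV_deriv_iff_field_differentiable)
  show "isCont (deriv \<phi>) s"
    using smooth[of 1] \<open>s \<in> U\<close> by (simp add: field_differentiable_imp_continuous_at)
qed

lemma op_diffeo_unit_deriv_nonneg:
  assumes "op_diffeo_unit \<phi>" "s \<in> {0..1}"
  shows "deriv \<phi> s \<ge> 0"
proof (rule ccontr)
  assume neg: "\<not> deriv \<phi> s \<ge> 0"
  have mono: "strict_mono_on {0..1} \<phi>"
    using assms(1) by (simp add: op_diffeo_unit_def)
  note der = op_diffeo_unit_has_derivative(1)[OF assms]
  show False
  proof (cases "s < 1")
    case True
    obtain d where "d > 0" and dec: "\<And>h. h > 0 \<Longrightarrow> h < d \<Longrightarrow> \<phi> (s + h) < \<phi> s"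
      using DERIV_neg_dec_right[OF der] neg by force
    define h where "h = min (d / 2) (1 - s)"
    have "h > 0" "h < d"
      using True \<open>d > 0\<close> by (auto simp: h_def)
    have "\<phi> s < \<phi> (s + h)"
      using assms(2) \<open>h > 0\<close> by (intro strict_mono_onD[OF mono]) (auto simp: h_def)
    then show False
      using dec[OF \<open>h > 0\<close> \<open>h < d\<close>] by simp
  next
    case False
    obtain d where "d > 0" and dec: "\<And>h. h > 0 \<Longrightarrow> h < d \<Longrightarrow> \<phi> s < \<phi> (s - h)"
      using DERIV_neg_dec_left[OF der] neg by force
    define h where "h = min (d / 2) s"
    have "h > 0" "h < d"
      using False \<open>d > 0\<close> by (auto simp: h_def)
    have "\<phi> (s - h) < \<phi> s"
      using assms(2) \<open>h > 0\<close> by (intro strict_mono_onD[OF mono]) (auto simp: h_def)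
    then show False
      using dec[OF \<open>h > 0\<close> \<open>h < d\<close>] by simp
  qed
qed

lemma nn_integral_op_diffeo_unit_substitution:
  assumes "op_diffeo_unit \<phi>" "G \<in> borel_measurable borel"
  shows "(\<integral>\<^sup>+t\<in>{0..1}. ennreal (G t) \<partial>lborel) = (\<integral>\<^sup>+s\<in>{0..1}. ennreal (G (\<phi> s) * deriv \<phi> s) \<partial>lborel)"
proof -
  have "(\<integral>\<^sup>+t. ennreal (G t * indicator {\<phi> 0..\<phi> 1} t) \<partial>lborel)
      = (\<integral>\<^sup>+s. ennreal (G (\<phi> s) * deriv \<phi> s * indicator {0..1} s) \<partial>lborel)"
  proof (rule nn_integral_substitution)
    show "set_borel_measurable borel {\<phi> 0..\<phi> 1} G"
      using assms(2) unfolding set_borel_measurable_def by measurable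
    show "continuous_on {0..1} (deriv \<phi>)"
      using op_diffeo_unit_has_derivative(2)[OF assms(1)] by (blast intro: continuous_at_imp_continuous_on)
  qed (use op_diffeo_unit_has_derivative(1)[OF assms(1)] op_diffeo_unit_deriv_nonneg[OF assms(1)] in auto)
  then show ?thesis
    unfolding op_diffeo_unit_endpoints[OF assms(1)] nn_integral_set_ennreal .
qed

lemma borel_measurable_op_diffeo_unit_substitution:
  assumes "op_diffeo_unit \<phi>" "G \<in> borel_measurable borel"
  shows "(\<lambda>s. G (\<phi> s) * deriv \<phi> s) \<in> borel_measurable (restrict_space lborel {0..1})"
proof -
  have "continuous_on {0..1} \<phi>" "continuous_on {0..1} (deriv \<phi>)"
    using DERIV_isCont op_diffeo_unit_has_derivative[OF assms(1)]
    by (metis continuous_at_imp_continuous_on)+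
  then have "\<phi> \<in> borel_measurable (restrict_space borel {0..1})"
    "deriv \<phi> \<in> borel_measurable (restrict_space borel {0..1})"
    by (auto intro: borel_measurable_continuous_on_restrict)
  then have "(\<lambda>s. G (\<phi> s) * deriv \<phi> s) \<in> borel_measurable (restrict_space borel {0..1})"
    using measurable_compose[of \<phi> _ _ G] assms(2) by (intro borel_measurable_times) auto
  moreover have "sets (restrict_space lborel {0..1}) = sets (restrict_space borel {0..1 :: real})"
    by (rule sets_restrict_space_cong) simp
  ultimately show ?thesis
    by (metis measurable_cong_sets)
qed

lemma positive_on_Icc_neighbourhood:
  fixes f :: "real \<Rightarrow> real"
  assumes "continuous_on UNIV f" "a \<le> b" "\<And>x. x \<in> {a..b} \<Longrightarrow> f x > 0"
  obtains d where "d > 0" "\<And>x. x \<in> {a - d..b + d} \<Longrightarrow> f x > 0"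
proof -
  have "open {x. f x > 0}"
    using assms(1) by (intro open_Collect_less) (auto intro: continuous_intros)
  then obtain e where e: "e > 0" "(\<Union>x\<in>{a..b}. ball x e) \<subseteq> {x. f x > 0}"
    using assms(3) compact_subset_open_imp_ball_epsilon_subset[of "{a..b}"] by blast
  have "f x > 0" if "x \<in> {a - e/2..b + e/2}" for x
  proof -
    have "max a (min b x) \<in> {a..b}" "x \<in> ball (max a (min b x)) e"
      using that e(1) assms(2) by (auto simp: dist_real_def)
    then show ?thesis
      using e(2) by blast
  qed
  then show ?thesis
    using that e(1) by (meson half_gt_zero)
qed

lemma op_diffeo_unit_poly_inverse:
  fixes K :: "real poly"
  assumes deriv_pos: "\<And>x. x \<in> {0..1} \<Longrightarrow> poly (pderiv K) x > 0"
    and K0: "poly K 0 = 0" and K1: "poly K 1 = 1"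
  obtains \<phi> where "op_diffeo_unit \<phi>"
    "\<And>s. s \<in> {0..1} \<Longrightarrow> poly (pderiv K) (\<phi> s) * deriv \<phi> s = 1"
proof -
  obtain a where "a > 0" and pos: "\<And>x. x \<in> {-a..1+a} \<Longrightarrow> poly (pderiv K) x > 0"
    by (rule positive_on_Icc_neighbourhood[of "poly (pderiv K)" 0 1])
      (use deriv_pos in \<open>auto intro: continuous_intros\<close>)
  define V where "V = {-a..1+a}"
  define \<phi> where "\<phi> = inv_into V (poly K)"
  have "-a \<le> 1 + a"
    using \<open>a > 0\<close> by simp
  note poly_inverse = inv_into_poly_Icc[OF this pos, folded V_def \<phi>_def]
  have K_mono: "strict_mono_on V (poly K)"
    by (rule poly_inverse(1))
  have "continuous_on V (poly K)"
    by (intro continuous_intros)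
  note inverse = strict_mono_on_inv_into_Icc[of "-a" "1+a" "poly K", folded V_def \<phi>_def, OF \<open>-a \<le> 1 + a\<close> this K_mono]
  have "0 \<in> V" "1 \<in> V"
    using \<open>a > 0\<close> by (auto simp: V_def)
  then have lo_hi: "poly K (-a) < 0" "1 < poly K (1+a)"
    using strict_mono_onD[OF K_mono, of "-a" 0] strict_mono_onD[OF K_mono, of 1 "1+a"] \<open>a > 0\<close> K0 K1
    by (auto simp: V_def)
  then have unit: "{0..1} \<subseteq> {poly K (-a)<..<poly K (1+a)}"
    by auto
  have "op_diffeo_unit \<phi>"
  proof (rule op_diffeo_unitI[where \<psi> = "poly K"])
    show "smooth_on_unit \<phi>"
      using poly_inverse(2) unit by (auto simp: smooth_on_unit_def)
    show "strict_mono_on {0..1} \<phi>"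
      using lo_hi by (intro monotone_on_subset[OF inverse(3)]) auto
    show "\<phi> 0 = 0" "\<phi> 1 = 1"
      using inverse(2)[OF \<open>0 \<in> V\<close>] inverse(2)[OF \<open>1 \<in> V\<close>] K0 K1 by simp_all
    show "poly K (\<phi> s) = s" if "s \<in> {0..1}" for s
      using inverse(1) unit that lo_hi unfolding \<phi>_def by (auto intro: f_inv_into_f)
    show "poly K x \<in> {0..1} \<and> \<phi> (poly K x) = x" if "x \<in> {0..1}" for x
    proof -
      have "x \<in> V"
        using that \<open>a > 0\<close> by (auto simp: V_def)
      then show ?thesis
        using that strict_mono_on_leD[OF K_mono, of 0 x] strict_mono_on_leD[OF K_mono, of x 1]
          inverse(2) \<open>0 \<in> V\<close> \<open>1 \<in> V\<close> K0 K1
        by auto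
    qed
  qed (rule smooth_on_unit_poly)
  moreover have "poly (pderiv K) (\<phi> s) * deriv \<phi> s = 1" if "s \<in> {0..1}" for s
    using poly_inverse(3) unit that by auto
  ultimately show ?thesis
    using that by blast
qed

text \<open>\<open>\<phi>\<close> is the inverse of the normalised primitive \<open>(A - A 0) / (A 1 - A 0)\<close>.\<close>

lemma op_diffeo_unit_equalizing:
  fixes A :: "real poly"
  assumes pos: "\<And>x. x \<in> {0..1} \<Longrightarrow> poly (pderiv A) x > 0"
  obtains \<phi> where "op_diffeo_unit \<phi>"
    "\<And>s. s \<in> {0..1} \<Longrightarrow> poly (pderiv A) (\<phi> s) * deriv \<phi> s = poly A 1 - poly A 0"
proof -
  define J where "J = poly A 1 - poly A 0"
  have "poly A 0 < poly A 1"
  proof (rule DERIV_pos_imp_increasing[of 0 1 "poly A"])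
    fix x :: real assume "0 \<le> x" "x \<le> 1"
    then show "\<exists>y. (poly A has_real_derivative y) (at x) \<and> y > 0"
      using pos by (intro exI[of _ "poly (pderiv A) x"] conjI poly_DERIV) simp
  qed simp
  then have "J > 0"
    by (simp add: J_def)
  define K where "K = smult (1 / J) (A - [:poly A 0:])"
  have K': "poly (pderiv K) x = poly (pderiv A) x / J" for x
    by (simp add: K_def pderiv_smult pderiv_diff)
  have K_pos: "poly (pderiv K) x > 0" if "x \<in> {0..1}" for x
    using pos[OF that] \<open>J > 0\<close> by (simp add: K')
  have "poly K 1 = J / J"
    by (simp add: K_def J_def)
  then have K0: "poly K 0 = 0" and K1: "poly K 1 = 1"
    using \<open>J > 0\<close> by (simp_all add: K_def)
  obtain \<phi> where "op_diffeo_unit \<phi>"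
    and inverse: "\<And>s. s \<in> {0..1} \<Longrightarrow> poly (pderiv K) (\<phi> s) * deriv \<phi> s = 1"
    using op_diffeo_unit_poly_inverse[of K, OF K_pos K0 K1] by blast
  moreover have "poly (pderiv A) (\<phi> s) * deriv \<phi> s = J" if "s \<in> {0..1}" for s
    using inverse[OF that] \<open>J > 0\<close> by (simp add: K' field_simps)
  ultimately show ?thesis
    using that by (simp add: J_def)
qed

section \<open>Approximation by positive polynomial densities\<close>

lemma real_polynomial_function_has_poly_antiderivative:
  assumes "real_polynomial_function q"
  obtains A :: "real poly" where "\<And>x. poly (pderiv A) x = q x"
proof -
  obtain a n where q: "q = (\<lambda>x. \<Sum>i\<le>n. a i * x ^ i)"
    using assms real_polynomial_function_iff_sum by blast
  have "\<exists>A :: real poly. \<forall>x. poly (pderiv A) x = (\<Sum>i\<le>m. a i * x ^ i)" for m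
  proof (induction m)
    case 0
    show ?case
      by (intro exI[of _ "[:0, a 0:]"]) (simp add: pderiv_pCons)
  next
    case (Suc m)
    then obtain A :: "real poly" where "\<forall>x. poly (pderiv A) x = (\<Sum>i\<le>m. a i * x ^ i)"
      by blast
    then show ?case
      by (intro exI[of _ "A + monom (a (Suc m) / real (Suc (Suc m))) (Suc (Suc m))"])
        (simp add: pderiv_add pderiv_monom poly_monom)
  qed
  then show ?thesis
    using that q by blast
qed

lemma tendsto_nn_integral_truncation_error:
  fixes F :: "'a \<Rightarrow> real"
  assumes [measurable]: "F \<in> borel_measurable M" and finite: "(\<integral>\<^sup>+x. ennreal (F x) \<partial>M) < \<infinity>"
  shows "(\<lambda>K. \<integral>\<^sup>+x. ennreal (F x - min (F x) (real K)) \<partial>M) \<longlonglongrightarrow> 0"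
proof -
  have "(\<lambda>K. \<integral>\<^sup>+x. ennreal (F x - min (F x) (real K)) \<partial>M) \<longlonglongrightarrow> (\<integral>\<^sup>+x. 0 \<partial>M)"
  proof (rule nn_integral_dominated_convergence[where w = "\<lambda>x. ennreal (F x)"])
    show "AE x in M. ennreal (F x - min (F x) (real K)) \<le> ennreal (F x)" for K
    proof (rule AE_I2)
      fix x
      show "ennreal (F x - min (F x) (real K)) \<le> ennreal (F x)"
        by (cases "F x \<ge> 0") (auto intro: ennreal_leI)
    qed
    show "AE x in M. (\<lambda>K. ennreal (F x - min (F x) (real K))) \<longlonglongrightarrow> 0"
    proof (intro AE_I2 tendsto_eventually)
      fix x
      show "\<forall>\<^sub>F K in sequentially. ennreal (F x - min (F x) (real K)) = 0"
      proof (rule eventually_mono[OF eventually_ge_at_top[of "nat \<lceil>F x\<rceil>"]])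
        fix K assume "nat \<lceil>F x\<rceil> \<le> K"
        then have "F x \<le> real K"
          using real_nat_ceiling_ge[of "F x"] by (meson of_nat_le_iff order_trans)
        then show "ennreal (F x - min (F x) (real K)) = 0"
          by simp
      qed
    qed
  qed (use finite in simp_all)
  then show ?thesis
    by simp
qed

lemma bounded_measurable_AE_limit_continuous:
  fixes F :: "'a::euclidean_space \<Rightarrow> real"
  assumes "F \<in> borel_measurable borel" and bounds: "\<And>x. 0 \<le> F x" "\<And>x. F x \<le> K"
  obtains c where "\<And>n. continuous_on UNIV (c n)" "\<And>n x. 0 \<le> c n x" "\<And>n x. c n x \<le> K"
    "AE x in lborel. (\<lambda>n. c n x) \<longlonglongrightarrow> F x"
proof -
  have "F \<in> borel_measurable lebesgue"
    using assms(1) by (intro measurable_completion) simp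
  then have "F measurable_on UNIV"
    by (rule lebesgue_measurable_imp_measurable_on_real) simp
  then obtain N g where "negligible N" and g_cont: "\<And>n. continuous_on UNIV (g n)"
    and g_lim: "\<And>x. x \<notin> N \<Longrightarrow> (\<lambda>n. g n x) \<longlonglongrightarrow> F x"
    unfolding measurable_on_def by auto
  define c where "c n x = max 0 (min K (g n x))" for n x
  have "continuous_on UNIV (c n)" for n
    unfolding c_def by (intro continuous_intros g_cont)
  moreover have "0 \<le> c n x" "c n x \<le> K" for n x
    using bounds[of x] by (auto simp: c_def)
  moreover have "AE x in lborel. (\<lambda>n. c n x) \<longlonglongrightarrow> F x"
  proof -
    have "N \<in> null_sets lebesgue"
      using \<open>negligible N\<close> negligible_iff_null_sets by blast
    then have "AE x in lebesgue. x \<notin> N"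
      using AE_not_in by blast
    then have "AE x in lebesgue. (\<lambda>n. c n x) \<longlonglongrightarrow> max 0 (min K (F x))"
      unfolding c_def by eventually_elim (intro tendsto_intros g_lim)
    then show ?thesis
      using bounds by (simp add: AE_completion_iff)
  qed
  ultimately show ?thesis
    using that by blast
qed

lemma bounded_measurable_L1_approx_continuous:
  fixes F :: "'a::euclidean_space \<Rightarrow> real" and \<eta> :: real
  assumes [measurable]: "F \<in> borel_measurable borel" and bounds: "\<And>x. 0 \<le> F x" "\<And>x. F x \<le> K"
    and S_sets [measurable]: "S \<in> sets lborel" and S_finite: "emeasure lborel S < \<infinity>" and "\<eta> > 0"
  obtains c where "continuous_on UNIV c" "\<And>x. 0 \<le> c x"
    "(\<integral>\<^sup>+x\<in>S. ennreal \<bar>F x - c x\<bar> \<partial>lborel) < ennreal \<eta>"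
proof -
  obtain c where c_cont: "\<And>n. continuous_on UNIV (c n)" and c_bounds: "\<And>n x. 0 \<le> c n x" "\<And>n x. c n x \<le> K"
    and c_lim: "AE x in lborel. (\<lambda>n. c n x) \<longlonglongrightarrow> F x"
    using bounded_measurable_AE_limit_continuous[OF assms(1) bounds] by blast
  have [measurable]: "c n \<in> borel_measurable borel" for n
    using c_cont by (rule borel_measurable_continuous_onI)
  have "(\<lambda>n. \<integral>\<^sup>+x. ennreal \<bar>F x - c n x\<bar> * indicator S x \<partial>lborel) \<longlonglongrightarrow> (\<integral>\<^sup>+x. 0 \<partial>(lborel :: 'a measure))"
  proof (rule nn_integral_dominated_convergence[where w = "\<lambda>x. ennreal K * indicator S x"])
    show "(\<integral>\<^sup>+x. ennreal K * indicator S x \<partial>lborel) < \<infinity>"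
      using S_finite by (simp add: nn_integral_cmult_indicator[OF S_sets] ennreal_mult_less_top)
    show "AE x in lborel. ennreal \<bar>F x - c n x\<bar> * indicator S x \<le> ennreal K * indicator S x" for n
    proof (rule AE_I2)
      fix x
      have "\<bar>F x - c n x\<bar> \<le> K"
        using bounds[of x] c_bounds[of n x] by (simp add: abs_le_iff)
      then show "ennreal \<bar>F x - c n x\<bar> * indicator S x \<le> ennreal K * indicator S x"
        by (simp add: indicator_def ennreal_leI)
    qed
    show "AE x in lborel. (\<lambda>n. ennreal \<bar>F x - c n x\<bar> * indicator S x) \<longlonglongrightarrow> 0"
      using c_lim
    proof eventually_elim
      case (elim x)
      have "(\<lambda>n. ennreal \<bar>F x - c n x\<bar> * indicator S x) \<longlonglongrightarrow> ennreal \<bar>F x - F x\<bar> * indicator S x"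
        by (intro tendsto_intros elim) (auto split: split_indicator)
      then show ?case
        by simp
    qed
  qed simp_all
  then have "(\<lambda>n. \<integral>\<^sup>+x\<in>S. ennreal \<bar>F x - c n x\<bar> \<partial>lborel) \<longlonglongrightarrow> 0"
    by simp
  moreover have "0 < ennreal \<eta>"
    using \<open>\<eta> > 0\<close> by (rule ennreal_less_zero_iff[THEN iffD2])
  ultimately have "\<forall>\<^sub>F n in sequentially. (\<integral>\<^sup>+x\<in>S. ennreal \<bar>F x - c n x\<bar> \<partial>lborel) < ennreal \<eta>"
    by (rule order_tendstoD(2))
  then obtain n where "(\<integral>\<^sup>+x\<in>S. ennreal \<bar>F x - c n x\<bar> \<partial>lborel) < ennreal \<eta>"
    unfolding eventually_sequentially by blast
  then show ?thesis
    using that[OF c_cont c_bounds(1)] by blast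
qed

lemma L1_approx_continuous_nonneg:
  fixes F :: "'a::euclidean_space \<Rightarrow> real" and \<eta> :: real
  assumes [measurable]: "F \<in> borel_measurable borel" and nonneg: "\<And>x. 0 \<le> F x"
    and finite: "(\<integral>\<^sup>+x. ennreal (F x) \<partial>lborel) < \<infinity>"
    and S_sets [measurable]: "S \<in> sets lborel" and S_finite: "emeasure lborel S < \<infinity>" and "\<eta> > 0"
  obtains c where "continuous_on UNIV c" "\<And>x. 0 \<le> c x"
    "(\<integral>\<^sup>+x\<in>S. ennreal \<bar>F x - c x\<bar> \<partial>lborel) < ennreal \<eta>"
proof -
  have "F \<in> borel_measurable lborel"
    by simp
  then have "(\<lambda>K. \<integral>\<^sup>+x. ennreal (F x - min (F x) (real K)) \<partial>lborel) \<longlonglongrightarrow> 0"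
    using finite by (rule tendsto_nn_integral_truncation_error)
  moreover have "0 < ennreal (\<eta> / 2)"
    using \<open>\<eta> > 0\<close> by (rule ennreal_less_zero_iff[THEN iffD2, OF half_gt_zero])
  ultimately have "\<forall>\<^sub>F K in sequentially.
      (\<integral>\<^sup>+x. ennreal (F x - min (F x) (real K)) \<partial>lborel) < ennreal (\<eta> / 2)"
    by (rule order_tendstoD(2))
  then obtain K :: nat
    where K: "(\<integral>\<^sup>+x. ennreal (F x - min (F x) (real K)) \<partial>lborel) < ennreal (\<eta> / 2)"
    unfolding eventually_sequentially by blast
  obtain c where c_cont: "continuous_on UNIV c" and c_nonneg: "\<And>x. 0 \<le> c x"
    and c_close: "(\<integral>\<^sup>+x\<in>S. ennreal \<bar>min (F x) (real K) - c x\<bar> \<partial>lborel) < ennreal (\<eta> / 2)"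
  proof (rule bounded_measurable_L1_approx_continuous[of "\<lambda>x. min (F x) (real K)" "real K" S "\<eta> / 2"])
    show "(\<lambda>x. min (F x) (real K)) \<in> borel_measurable borel"
      by measurable
  qed (use nonneg S_sets S_finite \<open>\<eta> > 0\<close> in auto)
  have [measurable]: "c \<in> borel_measurable borel"
    using c_cont by (rule borel_measurable_continuous_onI)
  have "(\<integral>\<^sup>+x\<in>S. ennreal \<bar>F x - c x\<bar> \<partial>lborel)
      \<le> (\<integral>\<^sup>+x. ennreal (F x - min (F x) (real K)) + ennreal \<bar>min (F x) (real K) - c x\<bar> * indicator S x \<partial>lborel)"
  proof (rule nn_integral_mono)
    fix x
    have "\<bar>F x - c x\<bar> \<le> (F x - min (F x) (real K)) + \<bar>min (F x) (real K) - c x\<bar>"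
      by linarith
    then have "ennreal \<bar>F x - c x\<bar> \<le> ennreal (F x - min (F x) (real K)) + ennreal \<bar>min (F x) (real K) - c x\<bar>"
      by (simp add: ennreal_plus[symmetric] ennreal_leI del: ennreal_plus)
    then show "ennreal \<bar>F x - c x\<bar> * indicator S x
        \<le> ennreal (F x - min (F x) (real K)) + ennreal \<bar>min (F x) (real K) - c x\<bar> * indicator S x"
      by (simp split: split_indicator)
  qed
  also have "\<dots> = (\<integral>\<^sup>+x. ennreal (F x - min (F x) (real K)) \<partial>lborel)
      + (\<integral>\<^sup>+x\<in>S. ennreal \<bar>min (F x) (real K) - c x\<bar> \<partial>lborel)"
    by (rule nn_integral_add) measurable
  also have "\<dots> < ennreal (\<eta> / 2 + \<eta> / 2)"
    using K c_close by (rule add_mono_ennreal)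
  finally show ?thesis
    using that c_cont c_nonneg by simp
qed

text \<open>A Weierstrass approximant of \<open>c \<ge> 0\<close> within \<open>\<delta> / 2\<close>, shifted up by \<open>\<delta> / 2\<close>, is positive.\<close>

lemma uniform_approx_poly_deriv_pos:
  fixes c :: "real \<Rightarrow> real" and \<delta> :: real
  assumes "continuous_on {0..1} c" "\<And>x. x \<in> {0..1} \<Longrightarrow> 0 \<le> c x" "\<delta> > 0"
  obtains A :: "real poly" where "\<And>x. x \<in> {0..1} \<Longrightarrow> poly (pderiv A) x > 0"
    "\<And>x. x \<in> {0..1} \<Longrightarrow> \<bar>c x - poly (pderiv A) x\<bar> < \<delta>"
proof -
  obtain q where q: "real_polynomial_function q" and q_close: "\<And>x. x \<in> {0..1} \<Longrightarrow> \<bar>c x - q x\<bar> < \<delta> / 2"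
    using Stone_Weierstrass_real_polynomial_function[of "{0..1}" c "\<delta> / 2"] assms(1,3) by auto
  obtain B :: "real poly" where B: "\<And>x. poly (pderiv B) x = q x"
    using real_polynomial_function_has_poly_antiderivative[OF q] by blast
  define A where "A = B + [:0, \<delta> / 2:]"
  have A: "poly (pderiv A) x = q x + \<delta> / 2" for x
    by (simp add: A_def pderiv_add pderiv_pCons B)
  show ?thesis
  proof (rule that)
    show "poly (pderiv A) x > 0" if "x \<in> {0..1}" for x
      using q_close[OF that] assms(2)[OF that] unfolding A by linarith
    show "\<bar>c x - poly (pderiv A) x\<bar> < \<delta>" if "x \<in> {0..1}" for x
      using q_close[OF that] \<open>\<delta> > 0\<close> unfolding A by linarith
  qed
qed

lemma L1_approx_poly_deriv_pos:
  fixes F :: "real \<Rightarrow> real" and \<eta> :: real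
  assumes [measurable]: "F \<in> borel_measurable borel" and "\<And>x. 0 \<le> F x"
    and "(\<integral>\<^sup>+x. ennreal (F x) \<partial>lborel) < \<infinity>" and "\<eta> > 0"
  obtains A :: "real poly" where "\<And>x. x \<in> {0..1} \<Longrightarrow> poly (pderiv A) x > 0"
    "(\<integral>\<^sup>+x\<in>{0..1}. ennreal \<bar>F x - poly (pderiv A) x\<bar> \<partial>lborel) < ennreal \<eta>"
proof -
  obtain c where c_cont: "continuous_on UNIV c" and c_nonneg: "\<And>x. 0 \<le> c x"
    and c_close: "(\<integral>\<^sup>+x\<in>{0..1}. ennreal \<bar>F x - c x\<bar> \<partial>lborel) < ennreal (\<eta> / 2)"
    using L1_approx_continuous_nonneg[of F "{0..1}" "\<eta> / 2"] assms by auto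
  have [measurable]: "c \<in> borel_measurable borel"
    using c_cont by (rule borel_measurable_continuous_onI)
  obtain A :: "real poly" where pos: "\<And>x. x \<in> {0..1} \<Longrightarrow> poly (pderiv A) x > 0"
    and A_close: "\<And>x. x \<in> {0..1} \<Longrightarrow> \<bar>c x - poly (pderiv A) x\<bar> < \<eta> / 4"
    using uniform_approx_poly_deriv_pos[of c "\<eta> / 4"] c_cont c_nonneg \<open>\<eta> > 0\<close>
    by (metis continuous_on_subset subset_UNIV zero_less_divide_iff zero_less_numeral)
  have "(\<integral>\<^sup>+x\<in>{0..1}. ennreal \<bar>F x - poly (pderiv A) x\<bar> \<partial>lborel)
      \<le> (\<integral>\<^sup>+x. ennreal \<bar>F x - c x\<bar> * indicator {0..1} x + ennreal (\<eta> / 4) * indicator {0..1} x \<partial>lborel)"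
  proof (rule nn_integral_mono)
    fix x :: real
    show "ennreal \<bar>F x - poly (pderiv A) x\<bar> * indicator {0..1} x
        \<le> ennreal \<bar>F x - c x\<bar> * indicator {0..1} x + ennreal (\<eta> / 4) * indicator {0..1} x"
    proof (cases "x \<in> {0..1}")
      case True
      then have "\<bar>F x - poly (pderiv A) x\<bar> \<le> \<bar>F x - c x\<bar> + \<eta> / 4"
        using A_close[OF True] by linarith
      then show ?thesis
        using True \<open>\<eta> > 0\<close> by (simp add: ennreal_plus[symmetric] ennreal_leI del: ennreal_plus)
    qed simp
  qed
  also have "\<dots> = (\<integral>\<^sup>+x\<in>{0..1}. ennreal \<bar>F x - c x\<bar> \<partial>lborel) + (\<integral>\<^sup>+x. ennreal (\<eta> / 4) * indicator {0..1::real} x \<partial>lborel)"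
    by (rule nn_integral_add; measurable)
  also have "\<dots> < ennreal \<eta>"
    using add_mono_ennreal[OF c_close, of "ennreal (\<eta> / 4)" "\<eta> / 2"] \<open>\<eta> > 0\<close>
    by (simp add: nn_integral_cmult_indicator ennreal_less_iff)
  finally show ?thesis
    using that pos by blast
qed

lemma nn_integral_Max_le:
  fixes g d :: "'i \<Rightarrow> 'a \<Rightarrow> real" and c :: "'i \<Rightarrow> real"
  assumes "finite I" "I \<noteq> {}"
    and d_meas: "\<And>i. i \<in> I \<Longrightarrow> d i \<in> borel_measurable M"
    and c_nonneg: "\<And>i. i \<in> I \<Longrightarrow> 0 \<le> c i"
    and d_nonneg: "\<And>i x. i \<in> I \<Longrightarrow> x \<in> space M \<Longrightarrow> 0 \<le> d i x"
    and bound: "\<And>i x. i \<in> I \<Longrightarrow> x \<in> space M \<Longrightarrow> g i x \<le> c i + d i x"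
  shows "(\<integral>\<^sup>+x. ennreal (MAX i\<in>I. g i x) \<partial>M)
    \<le> ennreal (MAX i\<in>I. c i) * emeasure M (space M) + (\<Sum>i\<in>I. \<integral>\<^sup>+x. ennreal (d i x) \<partial>M)"
proof -
  have c_max: "c i \<le> (MAX i\<in>I. c i)" if "i \<in> I" for i
    using assms(1) that by (intro Max_ge) auto
  then have "0 \<le> (MAX i\<in>I. c i)"
    using assms(2) c_nonneg by (meson all_not_in_conv order_trans)
  have "(\<integral>\<^sup>+x. ennreal (MAX i\<in>I. g i x) \<partial>M)
      \<le> (\<integral>\<^sup>+x. ennreal (MAX i\<in>I. c i) + (\<Sum>i\<in>I. ennreal (d i x)) \<partial>M)"
  proof (rule nn_integral_mono)
    fix x assume x: "x \<in> space M"
    have "g i x \<le> (MAX i\<in>I. c i) + (\<Sum>i\<in>I. d i x)" if "i \<in> I" for i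
    proof -
      have "d i x \<le> (\<Sum>i\<in>I. d i x)"
        using assms(1) that d_nonneg x by (intro member_le_sum) auto
      then show ?thesis
        using bound[OF that x] c_max[OF that] by linarith
    qed
    then have "(MAX i\<in>I. g i x) \<le> (MAX i\<in>I. c i) + (\<Sum>i\<in>I. d i x)"
      using assms(1,2) by (simp add: Max_le_iff)
    moreover have "0 \<le> (\<Sum>i\<in>I. d i x)"
      using d_nonneg x by (simp add: sum_nonneg)
    ultimately show "ennreal (MAX i\<in>I. g i x) \<le> ennreal (MAX i\<in>I. c i) + (\<Sum>i\<in>I. ennreal (d i x))"
      using \<open>0 \<le> (MAX i\<in>I. c i)\<close> d_nonneg x
      by (simp add: ennreal_plus[symmetric] ennreal_leI del: ennreal_plus)
  qed
  also have "\<dots> = ennreal (MAX i\<in>I. c i) * emeasure M (space M) + (\<Sum>i\<in>I. \<integral>\<^sup>+x. ennreal (d i x) \<partial>M)"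
    using d_meas by (simp add: nn_integral_add nn_integral_sum)
  finally show ?thesis .
qed

lemma set_nn_integral_le_add_L1_dist:
  fixes F h :: "'a \<Rightarrow> real"
  assumes [measurable]: "F \<in> borel_measurable M" "h \<in> borel_measurable M" "S \<in> sets M"
    and F_nonneg: "\<And>x. 0 \<le> F x"
  shows "(\<integral>\<^sup>+x\<in>S. ennreal (h x) \<partial>M) \<le> (\<integral>\<^sup>+x. ennreal (F x) \<partial>M) + (\<integral>\<^sup>+x\<in>S. ennreal \<bar>F x - h x\<bar> \<partial>M)"
proof -
  have "(\<integral>\<^sup>+x\<in>S. ennreal (h x) \<partial>M) \<le> (\<integral>\<^sup>+x. ennreal (F x) + ennreal \<bar>F x - h x\<bar> * indicator S x \<partial>M)"
  proof (rule nn_integral_mono)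
    fix x
    show "ennreal (h x) * indicator S x \<le> ennreal (F x) + ennreal \<bar>F x - h x\<bar> * indicator S x"
    proof (cases "x \<in> S")
      case True
      have "h x \<le> F x + \<bar>F x - h x\<bar>"
        by linarith
      then show ?thesis
        using True F_nonneg[of x] by (simp add: ennreal_plus[symmetric] ennreal_leI del: ennreal_plus)
    qed simp
  qed
  also have "\<dots> = (\<integral>\<^sup>+x. ennreal (F x) \<partial>M) + (\<integral>\<^sup>+x\<in>S. ennreal \<bar>F x - h x\<bar> \<partial>M)"
    by (rule nn_integral_add; measurable)
  finally show ?thesis .
qed

lemma borel_measurable_restrict_space_extend:
  fixes f :: "'a::euclidean_space \<Rightarrow> real"
  assumes "f \<in> borel_measurable (restrict_space lborel S)" "S \<in> sets borel"
  shows "(\<lambda>t. f t * indicator S t) \<in> borel_measurable borel"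
proof -
  have "(\<lambda>t. indicator S t *\<^sub>R f t) \<in> borel_measurable lborel"
    using assms by (subst (asm) borel_measurable_restrict_space_iff) auto
  then show ?thesis
    by (simp add: mult.commute)
qed

lemma reparametrized_deviation:
  fixes F h :: "real \<Rightarrow> real"
  assumes \<phi>: "op_diffeo_unit \<phi>" and [measurable]: "F \<in> borel_measurable borel" "h \<in> borel_measurable borel"
    and equal: "\<forall>s\<in>{0..1}. h (\<phi> s) * deriv \<phi> s = J"
  defines "d \<equiv> \<lambda>s. \<bar>F (\<phi> s) - h (\<phi> s)\<bar> * deriv \<phi> s"
  shows "d \<in> borel_measurable (restrict_space lborel {0..1})"
    and "\<And>s. s \<in> {0..1} \<Longrightarrow> 0 \<le> d s"
    and "\<And>s. s \<in> {0..1} \<Longrightarrow> F (\<phi> s) * deriv \<phi> s \<le> J + d s"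
    and "(\<integral>\<^sup>+s\<in>{0..1}. ennreal (d s) \<partial>lborel) = (\<integral>\<^sup>+x\<in>{0..1}. ennreal \<bar>F x - h x\<bar> \<partial>lborel)"
proof -
  show "d \<in> borel_measurable (restrict_space lborel {0..1})"
    unfolding d_def using \<phi> by (rule borel_measurable_op_diffeo_unit_substitution) measurable
  show "0 \<le> d s" if "s \<in> {0..1}" for s
    using op_diffeo_unit_deriv_nonneg[OF \<phi> that] by (simp add: d_def)
  show "F (\<phi> s) * deriv \<phi> s \<le> J + d s" if "s \<in> {0..1}" for s
  proof -
    have "F (\<phi> s) * deriv \<phi> s = h (\<phi> s) * deriv \<phi> s + (F (\<phi> s) - h (\<phi> s)) * deriv \<phi> s"
      by (simp add: algebra_simps)
    also have "\<dots> \<le> J + d s"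
      using equal that op_diffeo_unit_deriv_nonneg[OF \<phi> that] by (simp add: d_def mult_right_mono)
    finally show ?thesis .
  qed
  show "(\<integral>\<^sup>+s\<in>{0..1}. ennreal (d s) \<partial>lborel) = (\<integral>\<^sup>+x\<in>{0..1}. ennreal \<bar>F x - h x\<bar> \<partial>lborel)"
    unfolding d_def by (rule nn_integral_op_diffeo_unit_substitution[OF \<phi>, symmetric]) measurable
qed

lemma equalizing_reparametrization:
  fixes f :: "real \<Rightarrow> real" and \<eta> :: real
  assumes f_meas: "f \<in> borel_measurable (restrict_space lborel {0..1})"
    and f_nonneg: "\<And>t. t \<in> {0..1} \<Longrightarrow> 0 \<le> f t"
    and f_finite: "(\<integral>\<^sup>+t\<in>{0..1}. ennreal (f t) \<partial>lborel) < \<infinity>" and "\<eta> > 0"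
  obtains \<phi> J d where "op_diffeo_unit \<phi>" "0 \<le> J"
    "ennreal J \<le> (\<integral>\<^sup>+t\<in>{0..1}. ennreal (f t) \<partial>lborel) + ennreal \<eta>"
    "d \<in> borel_measurable (restrict_space lborel {0..1})"
    "\<And>s. s \<in> {0..1} \<Longrightarrow> 0 \<le> d s"
    "\<And>s. s \<in> {0..1} \<Longrightarrow> f (\<phi> s) * deriv \<phi> s \<le> J + d s"
    "(\<integral>\<^sup>+s\<in>{0..1}. ennreal (d s) \<partial>lborel) < ennreal \<eta>"
proof -
  define F where "F t = f t * indicator {0..1} t" for t
  have F_meas [measurable]: "F \<in> borel_measurable borel"
    using borel_measurable_restrict_space_extend[OF f_meas] by (simp add: F_def[abs_def])
  have F_nonneg: "0 \<le> F t" for t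
    using f_nonneg by (simp add: F_def indicator_def)
  have F_integral: "(\<integral>\<^sup>+t. ennreal (F t) \<partial>lborel) = (\<integral>\<^sup>+t\<in>{0..1}. ennreal (f t) \<partial>lborel)"
    by (simp add: F_def nn_integral_set_ennreal)
  obtain A :: "real poly" where A_pos: "\<And>x. x \<in> {0..1} \<Longrightarrow> poly (pderiv A) x > 0"
    and A_close: "(\<integral>\<^sup>+x\<in>{0..1}. ennreal \<bar>F x - poly (pderiv A) x\<bar> \<partial>lborel) < ennreal \<eta>"
    using L1_approx_poly_deriv_pos[OF F_meas F_nonneg] F_integral f_finite \<open>\<eta> > 0\<close> by metis
  define h where "h = poly (pderiv A)"
  define J where "J = poly A 1 - poly A 0"
  obtain \<phi> where \<phi>: "op_diffeo_unit \<phi>" and equal: "\<And>s. s \<in> {0..1} \<Longrightarrow> h (\<phi> s) * deriv \<phi> s = J"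
    using op_diffeo_unit_equalizing[OF A_pos] unfolding h_def J_def by blast
  have h_meas [measurable]: "h \<in> borel_measurable borel"
    unfolding h_def by (intro borel_measurable_continuous_onI continuous_intros)
  have "\<forall>s\<in>{0..1}. h (\<phi> s) * deriv \<phi> s = J"
    using equal by blast
  note deviation = reparametrized_deviation[OF \<phi> F_meas h_meas this]
  have "0 \<le> J"
    using equal[of 0] A_pos[OF op_diffeo_unit_image[OF \<phi>, of 0]] op_diffeo_unit_deriv_nonneg[OF \<phi>, of 0]
    unfolding h_def by (metis atLeastAtMost_iff less_imp_le order_refl zero_le_mult_iff zero_le_one)
  have "ennreal J = (\<integral>\<^sup>+x\<in>{0..1}. ennreal (h x) \<partial>lborel)"
    using A_pos h_meas unfolding h_def
    by (subst nn_integral_FTC_Icc[where F = "poly A"]) (auto simp: J_def intro: poly_DERIV less_imp_le)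
  also have "\<dots> \<le> (\<integral>\<^sup>+x. ennreal (F x) \<partial>lborel) + (\<integral>\<^sup>+x\<in>{0..1}. ennreal \<bar>F x - h x\<bar> \<partial>lborel)"
    using F_nonneg by (intro set_nn_integral_le_add_L1_dist) simp_all
  also have "\<dots> \<le> (\<integral>\<^sup>+t\<in>{0..1}. ennreal (f t) \<partial>lborel) + ennreal \<eta>"
    using A_close F_integral by (simp add: h_def less_imp_le)
  finally have "ennreal J \<le> (\<integral>\<^sup>+t\<in>{0..1}. ennreal (f t) \<partial>lborel) + ennreal \<eta>" .
  moreover have "f (\<phi> s) * deriv \<phi> s \<le> J + \<bar>F (\<phi> s) - h (\<phi> s)\<bar> * deriv \<phi> s" if "s \<in> {0..1}" for s
    using deviation(3)[OF that] op_diffeo_unit_image[OF \<phi> that] by (simp add: F_def)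
  moreover have "(\<integral>\<^sup>+s\<in>{0..1}. ennreal (\<bar>F (\<phi> s) - h (\<phi> s)\<bar> * deriv \<phi> s) \<partial>lborel) < ennreal \<eta>"
    using deviation(4) A_close by (simp add: h_def)
  ultimately show ?thesis
    using that \<phi> \<open>0 \<le> J\<close> deviation(1,2) by blast
qed

lemma reparametrization_Max_integral_le:
  fixes f :: "'i \<Rightarrow> real \<Rightarrow> real" and \<eta> :: real
  assumes fin: "finite I" "I \<noteq> {}"
    and f_meas: "\<And>i. i \<in> I \<Longrightarrow> f i \<in> borel_measurable (restrict_space lborel {0..1})"
    and f_nonneg: "\<And>i t. i \<in> I \<Longrightarrow> t \<in> {0..1} \<Longrightarrow> 0 \<le> f i t"
    and f_finite: "\<And>i. i \<in> I \<Longrightarrow> (\<integral>\<^sup>+t\<in>{0..1}. ennreal (f i t) \<partial>lborel) < \<infinity>"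
    and "\<eta> > 0"
  obtains \<phi> where "\<forall>i\<in>I. op_diffeo_unit (\<phi> i)"
    "(\<integral>\<^sup>+s\<in>{0..1}. ennreal (MAX i\<in>I. f i (\<phi> i s) * deriv (\<phi> i) s) \<partial>lborel)
      \<le> (MAX i\<in>I. \<integral>\<^sup>+t\<in>{0..1}. ennreal (f i t) \<partial>lborel) + ennreal ((real (card I) + 1) * \<eta>)"
proof -
  define mass where "mass i = (\<integral>\<^sup>+t\<in>{0..1}. ennreal (f i t) \<partial>lborel)" for i
  define good where "good i \<phi> J d \<longleftrightarrow> op_diffeo_unit \<phi> \<and> 0 \<le> J \<and> ennreal J \<le> mass i + ennreal \<eta> \<and>
      d \<in> borel_measurable (restrict_space lborel {0..1}) \<and>
      (\<forall>s\<in>{0..1}. 0 \<le> d s \<and> f i (\<phi> s) * deriv \<phi> s \<le> J + d s) \<and>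
      (\<integral>\<^sup>+s\<in>{0..1}. ennreal (d s) \<partial>lborel) < ennreal \<eta>"
    for i \<phi> J d
  have "\<exists>\<phi> J d. good i \<phi> J d" if i: "i \<in> I" for i
    unfolding good_def mass_def
    by (rule equalizing_reparametrization[OF f_meas[OF i] f_nonneg[OF i] f_finite[OF i] \<open>\<eta> > 0\<close>])
      blast+
  then obtain \<phi> J d where "\<And>i. i \<in> I \<Longrightarrow> good i (\<phi> i) (J i) (d i)"
    by metis
  then have \<phi>: "\<And>i. i \<in> I \<Longrightarrow> op_diffeo_unit (\<phi> i)"
    and J: "\<And>i. i \<in> I \<Longrightarrow> 0 \<le> J i \<and> ennreal (J i) \<le> mass i + ennreal \<eta>"
    and d: "\<And>i. i \<in> I \<Longrightarrow> d i \<in> borel_measurable (restrict_space lborel {0..1}) \<and>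
      (\<forall>s\<in>{0..1}. 0 \<le> d i s \<and> f i (\<phi> i s) * deriv (\<phi> i) s \<le> J i + d i s) \<and>
      (\<integral>\<^sup>+s\<in>{0..1}. ennreal (d i s) \<partial>lborel) < ennreal \<eta>"
    unfolding good_def by blast+
  have "(\<integral>\<^sup>+s\<in>{0..1}. ennreal (MAX i\<in>I. f i (\<phi> i s) * deriv (\<phi> i) s) \<partial>lborel)
      \<le> ennreal (MAX i\<in>I. J i) + (\<Sum>i\<in>I. \<integral>\<^sup>+s\<in>{0..1}. ennreal (d i s) \<partial>lborel)"
    using nn_integral_Max_le[OF fin, of d "restrict_space lborel {0..1}" J "\<lambda>i s. f i (\<phi> i s) * deriv (\<phi> i) s"] J d
    by (simp add: nn_integral_restrict_space emeasure_restrict_space)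
  also have "\<dots> \<le> ((MAX i\<in>I. mass i) + ennreal \<eta>) + (\<Sum>i\<in>I. ennreal \<eta>)"
  proof (rule add_mono)
    have "(MAX i\<in>I. J i) \<in> J ` I"
      using fin by (intro Max_in) auto
    then obtain k where "k \<in> I" "(MAX i\<in>I. J i) = J k"
      by blast
    then show "ennreal (MAX i\<in>I. J i) \<le> (MAX i\<in>I. mass i) + ennreal \<eta>"
      using J[of k] fin by (metis (no_types, lifting) Max_ge add_right_mono finite_imageI imageI order_trans)
    show "(\<Sum>i\<in>I. \<integral>\<^sup>+s\<in>{0..1}. ennreal (d i s) \<partial>lborel) \<le> (\<Sum>i\<in>I. ennreal \<eta>)"
      using d by (intro sum_mono less_imp_le) blast
  qed
  also have "\<dots> = (MAX i\<in>I. mass i) + ennreal ((real (card I) + 1) * \<eta>)"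
    using \<open>\<eta> > 0\<close> by (simp add: add.assoc ennreal_plus ennreal_mult ennreal_of_nat_eq_real_of_nat algebra_simps)
  finally have "(\<integral>\<^sup>+s\<in>{0..1}. ennreal (MAX i\<in>I. f i (\<phi> i s) * deriv (\<phi> i) s) \<partial>lborel)
      \<le> (MAX i\<in>I. mass i) + ennreal ((real (card I) + 1) * \<eta>)" .
  moreover have "\<forall>i\<in>I. op_diffeo_unit (\<phi> i)"
    using \<phi> by blast
  ultimately show ?thesis
    unfolding mass_def by (intro that)
qed

theorem lemma9:
  fixes N :: nat and f :: "nat \<Rightarrow> real \<Rightarrow> real" and \<epsilon> :: real
  assumes "N \<ge> 1"
    and "\<And>i. i \<in> {1..N} \<Longrightarrow> f i \<in> borel_measurable (restrict_space lborel {0..1})"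
    and "\<And>i t. i \<in> {1..N} \<Longrightarrow> t \<in> {0..1} \<Longrightarrow> f i t \<ge> 0"
    and "\<epsilon> > 0"
  shows "\<exists>\<phi> :: nat \<Rightarrow> real \<Rightarrow> real. (\<forall>i\<in>{1..N}. op_diffeo_unit (\<phi> i)) \<and>
     (\<integral>\<^sup>+ s\<in>{0..1}. ennreal (MAX i\<in>{1..N}. f i (\<phi> i s) * deriv (\<phi> i) s) \<partial>lborel)
       \<le> (MAX i\<in>{1..N}. \<integral>\<^sup>+ t\<in>{0..1}. ennreal (f i t) \<partial>lborel) + ennreal \<epsilon>"
proof (cases "\<exists>i\<in>{1..N}. (\<integral>\<^sup>+ t\<in>{0..1}. ennreal (f i t) \<partial>lborel) = \<infinity>")
  case True
  then obtain k where k: "k \<in> {1..N}" and infinite: "(\<integral>\<^sup>+ t\<in>{0..1}. ennreal (f k t) \<partial>lborel) = \<infinity>"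
    by blast
  have "(\<integral>\<^sup>+ t\<in>{0..1}. ennreal (f k t) \<partial>lborel) \<le> (MAX i\<in>{1..N}. \<integral>\<^sup>+ t\<in>{0..1}. ennreal (f i t) \<partial>lborel)"
    using k by (intro Max_ge finite_imageI imageI) simp_all
  then have "(MAX i\<in>{1..N}. \<integral>\<^sup>+ t\<in>{0..1}. ennreal (f i t) \<partial>lborel) = \<infinity>"
    using infinite by (simp add: top_unique)
  then show ?thesis
    using op_diffeo_unit_id by (intro exI[of _ "\<lambda>_. id"]) simp
next
  case False
  define \<eta> where "\<eta> = \<epsilon> / (real N + 1)"
  have "\<eta> > 0" "(real (card {1..N}) + 1) * \<eta> = \<epsilon>"
    using assms(4) by (simp_all add: \<eta>_def)
  have "finite {1..N}" "{1..N} \<noteq> {}"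
    using assms(1) by auto
  moreover have "\<And>i. i \<in> {1..N} \<Longrightarrow> (\<integral>\<^sup>+ t\<in>{0..1}. ennreal (f i t) \<partial>lborel) < \<infinity>"
    using False by (simp add: less_top)
  ultimately obtain \<phi> where "\<forall>i\<in>{1..N}. op_diffeo_unit (\<phi> i)"
    "(\<integral>\<^sup>+s\<in>{0..1}. ennreal (MAX i\<in>{1..N}. f i (\<phi> i s) * deriv (\<phi> i) s) \<partial>lborel)
      \<le> (MAX i\<in>{1..N}. \<integral>\<^sup>+t\<in>{0..1}. ennreal (f i t) \<partial>lborel) + ennreal ((real (card {1..N}) + 1) * \<eta>)"
    using reparametrization_Max_integral_le[of "{1..N}" f \<eta>] assms(2,3) \<open>\<eta> > 0\<close> by blast
  then show ?thesis
    using \<open>(real (card {1..N}) + 1) * \<eta> = \<epsilon>\<close> by auto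
qed

end
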